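(* Let $G$ be a graph on $d+2$ vertices with adjacency matrix $A_G$ having eigenvalues $\lambda_1\geq\lambda_2\geq\dots\geq\lambda_{d+2}$, and let $\overline{B_G}=\lambda_2 I - A_G$. If $w^T\overline{B_G}w\geq0$ for every $w\in\mathbf{1}^\perp$, then there exist a nonzero vector $w\in\mathbf{1}^\perp$ and a real number $\gamma$ with $\overline{B_G}w=\gamma\mathbf{1}$, and $\det(\overline{B_G})=0$.
   Context: Graphs are finite and simple; $\mathbf{1}$ is the all-ones vector and $\mathbf{1}^\perp$ its orthogonal complement. *)

theory Defs
  imports "HOL-Analysis.Analysis" "HOL-Computational_Algebra.Polynomial"
begin

definition simple_graph :: "('n \<Rightarrow> 'n \<Rightarrow> bool) \<Rightarrow> bool" where
  "simple_graph E \<longleftrightarrow> (\<forall>i j. E i j \<longleftrightarrow> E j i) \<and> (\<forall>i. \<not> E i i)"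

definition adj_matrix :: "('n::finite \<Rightarrow> 'n \<Rightarrow> bool) \<Rightarrow> real^'n^'n" where
  "adj_matrix E = (\<chi> i j. if E i j then 1 else 0)"

definition charpoly :: "real^'n^'n \<Rightarrow> real poly" where
  "charpoly A = det (\<chi> i j. (if i = j then [:0, 1:] else 0) - [:A $ i $ j:])"

definition eigenvalues_desc :: "real^'n^'n \<Rightarrow> real list" where
  "eigenvalues_desc A = rev (sorted_list_of_multiset (proots (charpoly A)))"

text \<open>lambda_2 (the list is 0-indexed).\<close>
definition lambda2 :: "real^'n^'n \<Rightarrow> real" where
  "lambda2 A = eigenvalues_desc A ! 1"

end

theory Submission
  imports Defs "HOL-Computational_Algebra.Fundamental_Theorem_Algebra"
begin

text \<open>
  Since the adjacency matrix \<open>A\<close> is real symmetric, its characteristic polynomial has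
  only real roots, so \<open>\<lambda>\<^sub>2\<close> is a genuine eigenvalue and \<open>det (\<lambda>\<^sub>2 I - A) = 0\<close>.
  Suppose \<open>B = \<lambda>\<^sub>2 I - A\<close> were positive definite on \<open>1\<^sup>\<bottom>\<close>. A kernel vector \<open>v\<close> of \<open>B\<close>
  then lies outside \<open>1\<^sup>\<bottom>\<close>, and projecting onto \<open>1\<^sup>\<bottom>\<close> along \<open>v\<close> shows that \<open>B\<close> is
  positive semidefinite everywhere with kernel spanned by \<open>v\<close>. Semidefiniteness forces
  \<open>\<lambda>\<^sub>1 \<le> \<lambda>\<^sub>2\<close>, so \<open>\<lambda>\<^sub>2\<close> is a double root of the characteristic polynomial; but an
  eigenvalue of a symmetric matrix whose eigenspace is a line is a simple root.
  Hence some \<open>w \<noteq> 0\<close> in \<open>1\<^sup>\<bottom>\<close> has \<open>w\<^sup>T B w \<le> 0\<close>. As \<open>B\<close> is semidefinite on \<open>1\<^sup>\<bottom>\<close>,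
  \<open>w\<close> minimises the form there, so \<open>B w\<close> is orthogonal to \<open>1\<^sup>\<bottom>\<close>, i.e. a multiple of \<open>1\<close>.
\<close>

lemma det_eq_0_iff_kernel:
  fixes C :: "'a::field^'n^'n"
  shows "det C = 0 \<longleftrightarrow> (\<exists>x. x \<noteq> 0 \<and> C *v x = 0)"
  using invertible_det_nz[of C] invertible_left_inverse[of C] matrix_left_invertible_ker[of C]
  by auto

lemma det_scale_column:
  fixes M :: "'a::comm_ring_1^'n^'n"
  shows "det (\<chi> i j. if j = k then c * M $ i $ j else M $ i $ j) = c * det M"
proof -
  let ?T = "\<lambda>i. row i (transpose M)"
  have "det (\<chi> i j. if j = k then c * M $ i $ j else M $ i $ j)
      = det (\<chi> i. if i = k then c *s ?T i else ?T i)"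
    by (subst det_transpose[symmetric])
      (rule arg_cong[where f = det], simp add: vec_eq_iff transpose_def row_def)
  also have "\<dots> = c * det (\<chi> i. if i = k then ?T i else ?T i)"
    by (rule det_row_mul)
  also have "(\<chi> i. if i = k then ?T i else ?T i) = transpose M"
    by (simp add: vec_eq_iff row_def)
  finally show ?thesis by simp
qed

lemma isCont_det_affine:
  fixes M N :: "real^'n^'n"
  shows "isCont (\<lambda>s. det (M + s *\<^sub>R N)) x"
  unfolding det_def by (simp add: continuous_intros)

lemma symmetric_matrix_entry: "transpose A = A \<Longrightarrow> A $ i $ j = A $ j $ i"
  by (metis transpose_def vec_lambda_beta)

lemma transpose_scaleR_id_minus:
  fixes A :: "'a::real_algebra_1^'n^'n"
  shows "transpose (c *\<^sub>R mat 1 - A) = c *\<^sub>R mat 1 - transpose A"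
  by (simp add: vec_eq_iff transpose_def mat_def)

lemma inner_matrix_vector_symmetric:
  fixes B :: "real^'n^'n"
  assumes "transpose B = B"
  shows "x \<bullet> (B *v y) = y \<bullet> (B *v x)"
  by (metis assms dot_lmul_matrix transpose_matrix_vector inner_commute)

section \<open>The characteristic polynomial\<close>

definition char_matrix :: "real^'n^'n \<Rightarrow> real poly^'n^'n" where
  "char_matrix A = (\<chi> i j. (if i = j then [:0, 1:] else 0) - [:A $ i $ j:])"

lemma charpoly_eq_det_char_matrix: "charpoly A = det (char_matrix A)"
  by (simp add: charpoly_def char_matrix_def)

lemma poly_det: "poly (det M) x = det (\<chi> i j. poly (M $ i $ j) x)"
  by (simp add: det_def poly_sum poly_prod)

lemma poly_charpoly: "poly (charpoly A) x = det (x *\<^sub>R mat 1 - A)"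
  unfolding charpoly_eq_det_char_matrix poly_det
  by (rule arg_cong[where f = det]) (simp add: char_matrix_def vec_eq_iff mat_def)

lemma degree_char_matrix_perm_term:
  fixes A :: "real^'n^'n"
  shows "degree (\<Prod>i\<in>UNIV. char_matrix A $ i $ p i) \<le> card {i. p i = i}"
proof -
  have "degree (\<Prod>i\<in>UNIV. char_matrix A $ i $ p i)
      \<le> (\<Sum>i\<in>UNIV. degree (char_matrix A $ i $ p i))"
    using degree_prod_sum_le[of UNIV "\<lambda>i. char_matrix A $ i $ p i"] by (simp add: o_def)
  also have "\<dots> \<le> (\<Sum>i\<in>UNIV. if p i = i then 1 else 0)"
    by (rule sum_mono) (auto simp: char_matrix_def)
  also have "\<dots> = card {i. p i = i}"
    by (simp add: sum.If_cases)
  finally show ?thesis .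
qed

lemma coeff_charpoly_card: "coeff (charpoly (A::real^'n^'n)) CARD('n) = 1"
proof -
  let ?term = "\<lambda>p. of_int (sign p) * (\<Prod>i\<in>UNIV. char_matrix A $ i $ p i)"
  have "coeff (\<Prod>i\<in>UNIV. char_matrix A $ i $ p i) CARD('n) = 0" if "p \<noteq> id" for p
  proof -
    obtain k where "p k \<noteq> k" using \<open>p \<noteq> id\<close> by (metis eq_id_iff)
    then have "card {i. p i = i} < CARD('n)" by (intro psubset_card_mono) auto
    then show ?thesis using degree_char_matrix_perm_term[of A p] by (intro coeff_eq_0) simp
  qed
  then have "coeff (charpoly A) CARD('n) = (\<Sum>p\<in>{id}. coeff (?term p) CARD('n))"
    unfolding charpoly_eq_det_char_matrix det_def coeff_sum
    by (intro sum.mono_neutral_right) (auto simp: permutes_id of_int_poly)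
  also have "\<dots> = coeff (\<Prod>i\<in>UNIV. [:- A $ i $ i, 1:]) CARD('n)"
    by (simp add: sign_id char_matrix_def)
  also have "\<dots> = 1"
  proof -
    have "degree (\<Prod>i\<in>UNIV. [:- A $ i $ i, 1:]) = CARD('n)"
      by (subst degree_prod_eq_sum_degree) auto
    moreover have "lead_coeff (\<Prod>i\<in>UNIV. [:- A $ i $ i, 1:]) = 1"
      by (simp add: lead_coeff_prod)
    ultimately show ?thesis by simp
  qed
  finally show ?thesis .
qed

lemma degree_charpoly: "degree (charpoly (A::real^'n^'n)) = CARD('n)"
proof (rule antisym)
  have "degree (of_int (sign p) * (\<Prod>i\<in>UNIV. char_matrix A $ i $ p i)) \<le> CARD('n)" for p
    using degree_char_matrix_perm_term[of A p] card_mono[of UNIV "{i. p i = i}"]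
      degree_smult_le[of "of_int (sign p)" "\<Prod>i\<in>UNIV. char_matrix A $ i $ p i"]
    by (simp add: of_int_poly)
  then show "degree (charpoly A) \<le> CARD('n)"
    unfolding charpoly_eq_det_char_matrix det_def by (intro degree_sum_le) auto
  show "CARD('n) \<le> degree (charpoly A)"
    by (rule le_degree) (simp add: coeff_charpoly_card)
qed

section \<open>Real-rootedness for symmetric matrices\<close>

lemma poly_map_poly_of_real: "poly (map_poly of_real p) (of_real x) = complex_of_real (poly p x)"
  by (induction p) (auto simp: map_poly_pCons)

lemma complex_poly_eqI_on_reals:
  fixes p q :: "complex poly"
  assumes "\<And>x::real. poly p (of_real x) = poly q (of_real x)"
  shows "p = q"
proof (rule ccontr)
  assume "p \<noteq> q"
  then have "finite {z. poly (p - q) z = 0}" by (intro poly_roots_finite) simp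
  moreover have "range complex_of_real \<subseteq> {z. poly (p - q) z = 0}" using assms by auto
  ultimately have "finite (range complex_of_real)" by (rule finite_subset[rotated])
  then show False by (simp add: finite_image_iff inj_on_def infinite_UNIV_char_0)
qed

lemma map_poly_of_real_mult:
  "map_poly complex_of_real (p * q) = map_poly of_real p * map_poly of_real q"
  by (rule complex_poly_eqI_on_reals) (simp add: poly_map_poly_of_real)

lemma size_proots_eq_degree_if_real_roots:
  fixes p :: "real poly"
  assumes "\<And>z. poly (map_poly of_real p) z = 0 \<Longrightarrow> Im z = 0"
  shows "size (proots p) = degree p"
  using assms
proof (induction "degree p" arbitrary: p)
  case 0
  then show ?case using size_proots_le[of p] by simp
next
  case (Suc n)
  have "degree (map_poly complex_of_real p) = degree p" by (rule degree_map_poly) simp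
  then obtain z where z: "poly (map_poly complex_of_real p) z = 0"
    using fundamental_theorem_of_algebra constant_degree Suc.hyps(2) by (metis nat.distinct(1))
  moreover have "z = of_real (Re z)" using Suc.prems[OF z] by (simp add: complex_eq_iff)
  ultimately have "poly p (Re z) = 0" by (metis poly_map_poly_of_real of_real_eq_0_iff)
  then obtain q where pq: "p = [:- Re z, 1:] * q"
    by (auto simp: poly_eq_0_iff_dvd elim: dvdE)
  have "q \<noteq> 0" using pq Suc.hyps(2) by auto
  then have "degree p = Suc (degree q)" unfolding pq by (subst degree_mult_eq) auto
  moreover have "Im w = 0" if "poly (map_poly complex_of_real q) w = 0" for w
    using Suc.prems[of w] that unfolding pq map_poly_of_real_mult by simp
  ultimately have "size (proots q) = n" using Suc.hyps by auto
  moreover have "proots p = proots [:- Re z, 1:] + proots q"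
    unfolding pq using \<open>q \<noteq> 0\<close> by (intro proots_mult) auto
  ultimately show ?case using Suc.hyps(2) by simp
qed

lemma real_symmetric_matrix_eigenvalue_real:
  fixes A :: "real^'n^'n"
  assumes "transpose A = A"
    and "det (mat z - (\<chi> i j. complex_of_real (A $ i $ j))) = 0"
  shows "Im z = 0"
proof -
  let ?C = "\<chi> i j. complex_of_real (A $ i $ j)"
  obtain x where "x \<noteq> 0" and "(mat z - ?C) *v x = 0"
    using assms(2) det_eq_0_iff_kernel by blast
  moreover have "mat z *v x = z *s x"
    by (simp add: vec_eq_iff matrix_vector_mult_def mat_def if_distrib[of "\<lambda>a. a * _"]
        cong: if_cong)
  ultimately have Cx: "(?C *v x) $ i = z * x $ i" for i
    by (simp add: vec_eq_iff matrix_vector_mult_diff_rdistrib)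
  define S where "S = (\<Sum>i\<in>UNIV. cnj (x $ i) * (?C *v x) $ i)"
  have "cnj S = (\<Sum>i\<in>UNIV. \<Sum>j\<in>UNIV. x $ i * of_real (A $ i $ j) * cnj (x $ j))"
    by (simp add: S_def matrix_vector_mult_def sum_distrib_left mult_ac)
  also have "\<dots> = S"
    by (subst sum.swap) (simp add: S_def matrix_vector_mult_def sum_distrib_left mult_ac
        symmetric_matrix_entry[OF assms(1)])
  finally have "Im S = 0" by (simp add: complex_eq_iff)
  have "S = (\<Sum>i\<in>UNIV. z * (x $ i * cnj (x $ i)))"
    by (simp add: S_def Cx mult_ac)
  also have "\<dots> = z * of_real (\<Sum>i\<in>UNIV. (norm (x $ i))\<^sup>2)"
    by (simp add: complex_norm_square sum_distrib_left del: of_real_power)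
  moreover have "(\<Sum>i\<in>UNIV. (norm (x $ i))\<^sup>2) > 0"
  proof -
    obtain k where "x $ k \<noteq> 0" using \<open>x \<noteq> 0\<close> by (metis vec_eq_iff zero_index)
    then show ?thesis by (intro sum_pos2[of UNIV k]) auto
  qed
  ultimately show ?thesis using \<open>Im S = 0\<close> by simp
qed

lemma of_real_det: "of_real (det M) = det (\<chi> i j. of_real (M $ i $ j))"
  by (simp add: det_def of_real_sum of_real_prod)

lemma poly_map_poly_of_real_charpoly:
  "poly (map_poly of_real (charpoly A)) z = det (mat z - (\<chi> i j. complex_of_real (A $ i $ j)))"
proof -
  let ?M = "\<chi> i j. (if i = j then [:0, 1:] else 0) - [:complex_of_real (A $ i $ j):]"
  have "map_poly of_real (charpoly A) = det ?M"
  proof (rule complex_poly_eqI_on_reals)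
    fix x :: real
    have "(\<chi> i j. complex_of_real ((x *\<^sub>R mat 1 - A) $ i $ j))
        = (\<chi> i j. poly (?M $ i $ j) (of_real x))"
      by (simp add: vec_eq_iff mat_def)
    then show "poly (map_poly of_real (charpoly A)) (of_real x) = poly (det ?M) (of_real x)"
      by (simp only: poly_map_poly_of_real poly_charpoly of_real_det poly_det)
  qed
  then show ?thesis
    by (simp add: poly_det) (rule arg_cong[where f = det], simp add: vec_eq_iff mat_def)
qed

lemma size_proots_charpoly_symmetric:
  fixes A :: "real^'n^'n"
  assumes "transpose A = A"
  shows "size (proots (charpoly A)) = CARD('n)"
  using size_proots_eq_degree_if_real_roots degree_charpoly
    real_symmetric_matrix_eigenvalue_real[OF assms] poly_map_poly_of_real_charpoly
  by metis

lemma two_largest_of_multiset: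
  fixes M :: "'a::linorder multiset"
  assumes "2 \<le> size M"
  defines "xs \<equiv> rev (sorted_list_of_multiset M)"
  shows "xs ! 1 \<le> xs ! 0" and "xs ! 0 \<in># M" and "xs ! 1 \<in># M"
    and "xs ! 0 = xs ! 1 \<Longrightarrow> 2 \<le> count M (xs ! 1)"
proof -
  have "mset xs = M" by (simp add: xs_def)
  then have "2 \<le> length xs" using assms(1) by (metis size_mset)
  then have xs: "xs = xs ! 0 # xs ! 1 # drop 2 xs"
    by (metis Cons_nth_drop_Suc One_nat_def Suc_1 Suc_le_lessD drop0 lessI order.strict_trans)
  then have M: "M = add_mset (xs ! 0) (add_mset (xs ! 1) (mset (drop 2 xs)))"
    using \<open>mset xs = M\<close> by (metis mset.simps(2))
  show "xs ! 1 \<le> xs ! 0"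
    using \<open>2 \<le> length xs\<close> by (intro sorted_rev_nth_mono) (auto simp: xs_def)
  show "xs ! 0 \<in># M" "xs ! 1 \<in># M"
    by (subst M, simp)+
  show "2 \<le> count M (xs ! 1)" if "xs ! 0 = xs ! 1"
    by (subst M) (simp add: that)
qed

section \<open>Quadratic forms on a hyperplane\<close>

lemma linear_coeff_zero_if_quadratic_nonneg:
  fixes a b :: real
  assumes "\<And>t. 0 \<le> t * a + t\<^sup>2 * b"
  shows "a = 0"
proof (rule ccontr)
  assume "a \<noteq> 0"
  define c where "c = \<bar>b\<bar> + 1"
  have "c > 0" by (simp add: c_def)
  have "c\<^sup>2 * ((- a / c) * a + (- a / c)\<^sup>2 * b) = a\<^sup>2 * (b - c)"
    using \<open>c > 0\<close> by (simp add: field_simps power2_eq_square)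
  also have "\<dots> < 0"
    using \<open>a \<noteq> 0\<close> by (intro mult_pos_neg) (auto simp: c_def)
  finally show False
    using assms[of "- a / c"] by (simp add: mult_less_0_iff)
qed

lemma inner_matrix_vector_zero_at_psd_minimum:
  fixes B :: "real^'n^'n"
  assumes "transpose B = B" and "subspace S"
    and psd: "\<And>x. x \<in> S \<Longrightarrow> 0 \<le> x \<bullet> (B *v x)"
    and "w \<in> S" "w \<bullet> (B *v w) \<le> 0" "z \<in> S"
  shows "z \<bullet> (B *v w) = 0"
proof -
  have "2 * (z \<bullet> (B *v w)) = 0"
  proof (rule linear_coeff_zero_if_quadratic_nonneg)
    fix t :: real
    have "w + t *\<^sub>R z \<in> S"
      using assms by (simp add: subspace_add subspace_scale)
    then have "0 \<le> (w + t *\<^sub>R z) \<bullet> (B *v (w + t *\<^sub>R z))" by (rule psd)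
    also have "\<dots> = w \<bullet> (B *v w) + t * (2 * (z \<bullet> (B *v w))) + t\<^sup>2 * (z \<bullet> (B *v z))"
      using inner_matrix_vector_symmetric[OF assms(1), of w z]
      by (simp add: matrix_vector_right_distrib matrix_vector_mult_scaleR inner_add_left
          inner_add_right power2_eq_square algebra_simps)
    finally show "0 \<le> t * (2 * (z \<bullet> (B *v w))) + t\<^sup>2 * (z \<bullet> (B *v z))"
      using psd[OF \<open>w \<in> S\<close>] \<open>w \<bullet> (B *v w) \<le> 0\<close> by simp
  qed
  then show ?thesis by simp
qed

lemma orthogonal_to_hyperplane_imp_multiple:
  fixes c y :: "'a::real_inner"
  assumes "\<And>z. z \<bullet> c = 0 \<Longrightarrow> z \<bullet> y = 0"
  shows "\<exists>g. y = g *\<^sub>R c"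
proof -
  define z where "z = y - ((y \<bullet> c) / (c \<bullet> c)) *\<^sub>R c"
  have "z \<bullet> c = 0"
    by (cases "c = 0") (simp_all add: z_def inner_diff_left)
  then have "z \<bullet> z = 0"
    using assms by (simp add: z_def inner_diff_right)
  then show ?thesis unfolding z_def by auto
qed

lemma psd_on_hyperplane_minimum_imp_multiple:
  fixes B :: "real^'n^'n"
  assumes "transpose B = B"
    and "\<And>x. x \<bullet> c = 0 \<Longrightarrow> 0 \<le> x \<bullet> (B *v x)"
    and "w \<bullet> c = 0" "w \<bullet> (B *v w) \<le> 0"
  shows "\<exists>\<gamma>. B *v w = \<gamma> *\<^sub>R c"
proof (rule orthogonal_to_hyperplane_imp_multiple)
  have "subspace {x. x \<bullet> c = 0}"
    using subspace_hyperplane[of c] by (simp add: inner_commute)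
  then show "z \<bullet> (B *v w) = 0" if "z \<bullet> c = 0" for z
    using assms that by (intro inner_matrix_vector_zero_at_psd_minimum[of B "{x. x \<bullet> c = 0}"]) auto
qed

lemma psd_and_kernel_line_if_pos_def_on_hyperplane:
  fixes B :: "real^'n^'n"
  assumes "transpose B = B"
    and pd: "\<And>w. w \<noteq> 0 \<Longrightarrow> w \<bullet> c = 0 \<Longrightarrow> 0 < w \<bullet> (B *v w)"
    and "B *v v = 0" "v \<noteq> 0"
  shows "0 \<le> x \<bullet> (B *v x)"
    and "B *v x = 0 \<Longrightarrow> \<exists>t. x = t *\<^sub>R v"
proof -
  have "v \<bullet> c \<noteq> 0" using pd[OF \<open>v \<noteq> 0\<close>] \<open>B *v v = 0\<close> by auto
  define h where "h = x - ((x \<bullet> c) / (v \<bullet> c)) *\<^sub>R v"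
  have "h \<bullet> c = 0"
    using \<open>v \<bullet> c \<noteq> 0\<close> by (simp add: h_def inner_diff_left)
  have "B *v h = B *v x"
    by (simp add: h_def matrix_vector_mult_diff_distrib matrix_vector_mult_scaleR \<open>B *v v = 0\<close>)
  moreover have "v \<bullet> (B *v x) = 0"
    using inner_matrix_vector_symmetric[OF assms(1), of v x] \<open>B *v v = 0\<close> by simp
  ultimately have form_h: "h \<bullet> (B *v h) = x \<bullet> (B *v x)"
    by (simp add: h_def inner_diff_left)
  show "0 \<le> x \<bullet> (B *v x)"
    using pd[OF _ \<open>h \<bullet> c = 0\<close>] form_h by (cases "h = 0") force+
  assume "B *v x = 0"
  then have "h = 0" using pd[OF _ \<open>h \<bullet> c = 0\<close>] form_h by force
  then show "\<exists>t. x = t *\<^sub>R v" unfolding h_def by (metis eq_iff_diff_eq_0)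
qed

lemma eigenvalue_le_if_psd:
  fixes A :: "real^'n^'n"
  assumes "\<And>x. 0 \<le> x \<bullet> ((l *\<^sub>R mat 1 - A) *v x)" and "poly (charpoly A) l' = 0"
  shows "l' \<le> l"
proof -
  obtain u where "u \<noteq> 0" and "(l' *\<^sub>R mat 1 - A) *v u = 0"
    using assms(2) det_eq_0_iff_kernel by (metis poly_charpoly)
  then have "(l *\<^sub>R mat 1 - A) *v u = (l - l') *\<^sub>R u"
    by (simp add: matrix_vector_mult_diff_rdistrib scaleR_matrix_vector_assoc[symmetric]
        algebra_simps)
  then have "0 \<le> (l - l') * (u \<bullet> u)" using assms(1)[of u] by simp
  moreover have "u \<bullet> u > 0" using \<open>u \<noteq> 0\<close> by simp
  ultimately show ?thesis by (simp add: zero_le_mult_iff)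
qed

section \<open>Simple eigenvalues of symmetric matrices\<close>

lemma det_replace_column_by_kernel_vector_nonzero:
  fixes B :: "real^'n^'n"
  assumes "transpose B = B" "B *v v = 0" "v $ k \<noteq> 0"
    and kernel: "\<And>x. B *v x = 0 \<Longrightarrow> \<exists>t. x = t *\<^sub>R v"
  shows "det (\<chi> i j. if j = k then v $ i else B $ i $ j) \<noteq> 0"
proof
  assume "det (\<chi> i j. if j = k then v $ i else B $ i $ j) = 0"
  then obtain x where "x \<noteq> 0" and x: "(\<chi> i j. if j = k then v $ i else B $ i $ j) *v x = 0"
    using det_eq_0_iff_kernel by blast
  define y where "y = (\<chi> j. if j = k then 0 else x $ j)"
  have "(\<chi> i j. if j = k then v $ i else B $ i $ j) *v x = x $ k *\<^sub>R v + B *v y"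
    by (simp add: vec_eq_iff matrix_vector_mult_def y_def if_distrib[of "\<lambda>a. a * _"]
        if_distrib[of "\<lambda>a. _ * a"] sum.delta_remove cong: if_cong)
  with x have eq: "x $ k *\<^sub>R v + B *v y = 0" by simp
  have "v \<bullet> (B *v y) = 0"
    using inner_matrix_vector_symmetric[OF assms(1), of v y] \<open>B *v v = 0\<close> by simp
  then have "x $ k * (v \<bullet> v) = 0"
    using arg_cong[OF eq, of "inner v"] by (simp add: inner_add_right)
  then have "x $ k = 0" using \<open>v $ k \<noteq> 0\<close> by auto
  then have "y = x" by (simp add: y_def vec_eq_iff)
  with eq \<open>x $ k = 0\<close> obtain t where "x = t *\<^sub>R v" using kernel by auto
  with \<open>x $ k = 0\<close> \<open>v $ k \<noteq> 0\<close> \<open>x \<noteq> 0\<close> show False by simp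
qed

lemma eigenvalue_not_double_root_if_eigenspace_line:
  fixes A :: "real^'n^'n"
  assumes "transpose A = A"
    and "(l *\<^sub>R mat 1 - A) *v v = 0" "v \<noteq> 0"
    and "\<And>x. (l *\<^sub>R mat 1 - A) *v x = 0 \<Longrightarrow> \<exists>t. x = t *\<^sub>R v"
  shows "\<not> [:- l, 1:]\<^sup>2 dvd charpoly A"
proof
  assume "[:- l, 1:]\<^sup>2 dvd charpoly A"
  then obtain q where q: "charpoly A = [:- l, 1:]\<^sup>2 * q" by (elim dvdE)
  define B where "B = l *\<^sub>R mat 1 - A"
  have "transpose B = B"
    using assms(1) by (simp add: B_def transpose_scaleR_id_minus)
  obtain k where "v $ k \<noteq> 0" using \<open>v \<noteq> 0\<close> by (metis vec_eq_iff zero_index)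
  txt \<open>Replacing column \<open>k\<close> of \<open>B + s I\<close> by \<open>v\<close> gives \<open>M + s D\<close>; by Cramer's rule
    \<open>s det (M + s D) = v\<^sub>k det (B + s I) = v\<^sub>k s\<^sup>2 q (l + s)\<close>, so letting \<open>s \<rightarrow> 0\<close>
    gives \<open>det M = 0\<close>, although the one-dimensional kernel makes \<open>M\<close> nonsingular.\<close>
  define M where "M = (\<chi> i j. if j = k then v $ i else B $ i $ j)"
  define D :: "real^'n^'n" where "D = (\<chi> i j. if j = k then 0 else mat 1 $ i $ j)"
  have "det M \<noteq> 0"
    unfolding M_def using \<open>transpose B = B\<close> assms(2,4) \<open>v $ k \<noteq> 0\<close>
    by (intro det_replace_column_by_kernel_vector_nonzero) (auto simp: B_def)
  have scaled: "s * det (M + s *\<^sub>R D) = s * (v $ k * s * poly q (l + s))" for s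
  proof -
    have Fv: "(B + s *\<^sub>R mat 1) *v v = s *\<^sub>R v"
      using assms(2)
      by (simp add: B_def matrix_vector_mult_add_rdistrib scaleR_matrix_vector_assoc[symmetric])
    have "det (\<chi> i j. if j = k then s * v $ i else (B + s *\<^sub>R mat 1) $ i $ j)
        = v $ k * det (B + s *\<^sub>R mat 1)"
      using cramer_lemma[of k "B + s *\<^sub>R mat 1" v,
          unfolded Fv vector_scaleR_component real_scaleR_def] .
    moreover have "det (B + s *\<^sub>R mat 1) = s\<^sup>2 * poly q (l + s)"
    proof -
      have "B + s *\<^sub>R mat 1 = (l + s) *\<^sub>R mat 1 - A"
        by (simp add: B_def algebra_simps scaleR_add_left)
      then show ?thesis by (simp add: poly_charpoly[symmetric] q)
    qed
    moreover have "(\<chi> i j. if j = k then s * v $ i else (B + s *\<^sub>R mat 1) $ i $ j)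
        = (\<chi> i j. if j = k then s * (M + s *\<^sub>R D) $ i $ j else (M + s *\<^sub>R D) $ i $ j)"
      by (simp add: vec_eq_iff M_def D_def)
    ultimately show ?thesis by (simp add: det_scale_column power2_eq_square mult_ac)
  qed
  have "det (M + s *\<^sub>R D) = v $ k * s * poly q (l + s)" if "s \<noteq> 0" for s
    using scaled[of s] that by simp
  then have "\<forall>\<^sub>F s in at 0. v $ k * s * poly q (l + s) = det (M + s *\<^sub>R D)"
    by (simp add: eventually_at_filter)
  moreover have "((\<lambda>s. v $ k * s * poly q (l + s)) \<longlongrightarrow> v $ k * 0 * poly q (l + 0)) (at 0)"
    by (intro tendsto_intros)
  ultimately have "((\<lambda>s. det (M + s *\<^sub>R D)) \<longlongrightarrow> 0) (at 0)"
    by (simp add: Lim_transform_eventually)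
  moreover have "((\<lambda>s. det (M + s *\<^sub>R D)) \<longlongrightarrow> det M) (at 0)"
    using isCont_det_affine[of 0 M D] by (simp add: isCont_def)
  ultimately have "det M = 0" by (rule tendsto_unique[OF trivial_limit_at, rotated])
  with \<open>det M \<noteq> 0\<close> show False ..
qed

lemma exists_nonpos_form_on_hyperplane:
  fixes A :: "real^'n^'n" and c :: "real^'n"
  assumes "transpose A = A"
    and "poly (charpoly A) l = 0" "poly (charpoly A) l' = 0" "l \<le> l'"
    and "l' = l \<Longrightarrow> [:- l, 1:]\<^sup>2 dvd charpoly A"
  shows "\<exists>w. w \<noteq> 0 \<and> w \<bullet> c = 0 \<and> w \<bullet> ((l *\<^sub>R mat 1 - A) *v w) \<le> 0"
proof (rule ccontr)
  let ?B = "l *\<^sub>R mat 1 - A"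
  assume "\<not> ?thesis"
  then have pd: "\<And>w. w \<noteq> 0 \<Longrightarrow> w \<bullet> c = 0 \<Longrightarrow> 0 < w \<bullet> (?B *v w)" by force
  obtain v where "v \<noteq> 0" "?B *v v = 0"
    using assms(2) det_eq_0_iff_kernel by (metis poly_charpoly)
  have "transpose ?B = ?B" using assms(1) by (simp add: transpose_scaleR_id_minus)
  note psd = psd_and_kernel_line_if_pos_def_on_hyperplane[where c = c,
      OF this pd \<open>?B *v v = 0\<close> \<open>v \<noteq> 0\<close>]
  have "l' = l" using eigenvalue_le_if_psd[OF psd(1) assms(3)] assms(4) by simp
  then show False
    using eigenvalue_not_double_root_if_eigenspace_line[OF assms(1) \<open>?B *v v = 0\<close> \<open>v \<noteq> 0\<close> psd(2)]
      assms(5) by blast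
qed

theorem lemma4p6:
  fixes E :: "'n::finite \<Rightarrow> 'n \<Rightarrow> bool" and d :: nat
  assumes "simple_graph E"
    and "CARD('n) = d + 2"
    and "\<forall>w::real^'n. w \<bullet> vec 1 = 0 \<longrightarrow>
           0 \<le> w \<bullet> ((lambda2 (adj_matrix E) *\<^sub>R mat 1 - adj_matrix E) *v w)"
  shows "(\<exists>w::real^'n. w \<noteq> 0 \<and> w \<bullet> vec 1 = 0 \<and>
            (\<exists>\<gamma>::real. (lambda2 (adj_matrix E) *\<^sub>R mat 1 - adj_matrix E) *v w = \<gamma> *\<^sub>R vec 1))
         \<and> det (lambda2 (adj_matrix E) *\<^sub>R mat 1 - adj_matrix E) = 0"
proof -
  define A where "A = adj_matrix E"
  define B where "B = lambda2 A *\<^sub>R mat 1 - A"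
  have "transpose A = A"
    using assms(1) by (simp add: A_def adj_matrix_def transpose_def simple_graph_def vec_eq_iff)
  then have "transpose B = B" by (simp add: B_def transpose_scaleR_id_minus)
  have "2 \<le> size (proots (charpoly A))"
    using size_proots_charpoly_symmetric[OF \<open>transpose A = A\<close>] assms(2) by simp
  note top_two = two_largest_of_multiset[OF this, folded eigenvalues_desc_def lambda2_def]
  have "charpoly A \<noteq> 0" using coeff_charpoly_card[of A] by auto
  then have "poly (charpoly A) (lambda2 A) = 0" "poly (charpoly A) (eigenvalues_desc A ! 0) = 0"
    using top_two(2,3) by auto
  moreover have "[:- lambda2 A, 1:]\<^sup>2 dvd charpoly A" if "eigenvalues_desc A ! 0 = lambda2 A"
    using top_two(4)[OF that] \<open>charpoly A \<noteq> 0\<close> by (simp add: order_divides)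
  ultimately obtain w where "w \<noteq> 0" "w \<bullet> vec 1 = 0" "w \<bullet> (B *v w) \<le> 0"
    using exists_nonpos_form_on_hyperplane[OF \<open>transpose A = A\<close>, of "lambda2 A"] top_two(1)
    unfolding B_def by blast
  moreover obtain \<gamma> where "B *v w = \<gamma> *\<^sub>R vec 1"
    using psd_on_hyperplane_minimum_imp_multiple[OF \<open>transpose B = B\<close> _ \<open>w \<bullet> vec 1 = 0\<close>]
      \<open>w \<bullet> (B *v w) \<le> 0\<close> assms(3) unfolding B_def A_def by blast
  moreover have "det B = 0"
    using \<open>poly (charpoly A) (lambda2 A) = 0\<close> by (simp add: B_def poly_charpoly)
  ultimately show ?thesis unfolding B_def A_def by blast
qed

end
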